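(* Let $\Lambda=\lambda+\ell\Lambda_0+z\delta$ be a dominant weight (with $\lambda$ a dominant integral weight of the finite root system, $\ell\in\mathbb{N}$ its level, $z\in\mathbb{Z}$), let $x,y\in V_0$ and $u\in W_0$. Then $$\mathcal{L}_\Lambda(t_{x+y}u)=\mathcal{L}_\Lambda(t_xu)+\mathcal{L}_\Lambda(t_yu)+\mathcal{D}_\Lambda(u,x,y),\qquad \mathcal{D}_\Lambda(u,x,y)=h\ell\,(x|y)-\mathcal{L}_\lambda(u).$$ In particular, for every $0\le i\le n$, $$\mathcal{L}_{\Lambda_i}(t_xt_y)=\mathcal{L}_{\Lambda_i}(t_x)+\mathcal{L}_{\Lambda_i}(t_y)+h\frac{a_i^\vee}{a_0^\vee}(x|y).$$
   Context: Let $A=(a_{ij})_{0\le i,j\le n}$ be a generalized Cartan matrix of affine type with realization $\Delta=\{\alpha_0,\dots,\alpha_n\}\subset\mathfrak h^*$, $\Delta^\vee=\{\alpha_0^\vee,\dots,\alpha_n^\vee\}\subset\mathfrak h$, $\dim\mathfrak h=n+2$, $\langle\alpha_j,\alpha_i^\vee\rangle=a_{ij}$. Let $(a_0,\dots,a_n)$, $(a_0^\vee,\dots,a_n^\vee)$ be the primitive positive integer vectors in the kernels of $A$ and $A^T$; $h=\sum a_i$, $\delta=\sum a_i\alpha_i$, $c=\sum a_i^\vee\alpha_i^\vee$. $V_0=\bigoplus_{i=1}^n\mathbb{R}\alpha_i$ with the standard invariant symmetric form $(\cdot|\cdot)$ (with $(\alpha_i|\alpha_j)=a_i^\vee a_i^{-1}a_{ij}$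 for $i,j\ge1$, $(\delta|\cdot)$ vanishing on $V_0$ and $\delta$). $W_0=\langle s_1,\dots,s_n\rangle$ with $s_i(x)=x-\langle x,\alpha_i^\vee\rangle\alpha_i$. $\omega_i\in V_0$ are the finite fundamental weights, $\Lambda_i$ the affine fundamental weights ($\langle\Lambda_i,\alpha_j^\vee\rangle=\delta_{ij}$) with $\Lambda_i=\frac{a_i^\vee}{a_0^\vee}\Lambda_0+\omega_i$; $\rho^\vee\in\mathfrak h$ satisfies $\langle\alpha_i,\rho^\vee\rangle=1$ for all $i$. For $x\in V_0$, $t_x\in GL(\mathfrak h^* )$ is $t_x(v)=v+\langle v,c\rangle x-((v|x)+\frac12|x|^2\langle v,c\rangle)\delta$. For any $g\in GL(\mathfrak h^* )$ and weight $\mu$, $\mathcal{L}_\mu(g)=\langle\mu-g\mu,\rho^\vee\rangle$; in particular $\mathcal{L}_\lambda(u)=\langle\lambda-u\lambda,\rho^\vee\rangle$ for $u\in W_0$. The level of $\Lambda$ is $\ell=\langle\Lambda,c\rangle$.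
   Formalization: The label $a_0^\vee$ is assumed to equal 1, a hypothesis on the primitive kernel vector of $A^T$ absent from the context, and both the main identity and the formula for $\mathcal{L}_{\Lambda_i}$ rest on it. The paper assumes this as well. *)

theory Defs
  imports "HOL-Analysis.Analysis"
begin

text \<open>Indices of the affine Cartan matrix run over 0..n. The generalized Cartan
matrix is a function nat => nat => int, only its entries with indices at most n matter.\<close>

definition GCM :: "nat \<Rightarrow> (nat \<Rightarrow> nat \<Rightarrow> int) \<Rightarrow> bool" where
  "GCM n A \<longleftrightarrow> (\<forall>i\<le>n. A i i = 2) \<and> (\<forall>i\<le>n. \<forall>j\<le>n. i \<noteq> j \<longrightarrow> A i j \<le> 0)
     \<and> (\<forall>i\<le>n. \<forall>j\<le>n. A i j = 0 \<longleftrightarrow> A j i = 0)"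

definition indecomposable :: "nat \<Rightarrow> (nat \<Rightarrow> nat \<Rightarrow> int) \<Rightarrow> bool" where
  "indecomposable n A \<longleftrightarrow> \<not> (\<exists>I J. I \<noteq> {} \<and> J \<noteq> {} \<and> I \<inter> J = {} \<and> I \<union> J = {..n}
      \<and> (\<forall>i\<in>I. \<forall>j\<in>J. A i j = 0))"

text \<open>Affine type (Kac, Thm 4.3 (Aff)): indecomposable GCM of corank 1 with a positive
null vector u, and A v \<ge> 0 implies A v = 0.\<close>
definition affine_type :: "nat \<Rightarrow> (nat \<Rightarrow> nat \<Rightarrow> int) \<Rightarrow> bool" where
  "affine_type n A \<longleftrightarrow> GCM n A \<and> indecomposable n A \<and>
    (\<exists>u::nat \<Rightarrow> real. (\<forall>i\<le>n. u i > 0) \<and> (\<forall>i\<le>n. (\<Sum>j\<le>n. of_int (A i j) * u j) = 0)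
       \<and> (\<forall>v::nat \<Rightarrow> real. (\<forall>i\<le>n. (\<Sum>j\<le>n. of_int (A i j) * v j) = 0)
               \<longrightarrow> (\<exists>c. \<forall>i\<le>n. v i = c * u i))) \<and>
    (\<forall>v::nat \<Rightarrow> real. (\<forall>i\<le>n. (\<Sum>j\<le>n. of_int (A i j) * v j) \<ge> 0)
               \<longrightarrow> (\<forall>i\<le>n. (\<Sum>j\<le>n. of_int (A i j) * v j) = 0))"

definition null_labels :: "nat \<Rightarrow> (nat \<Rightarrow> nat \<Rightarrow> int) \<Rightarrow> (nat \<Rightarrow> nat) \<Rightarrow> bool" where
  "null_labels n A a \<longleftrightarrow> (\<forall>i\<le>n. a i > 0) \<and> (\<forall>i\<le>n. (\<Sum>j\<le>n. A i j * int (a j)) = 0)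
      \<and> Gcd (a ` {..n}) = 1"

definition conull_labels :: "nat \<Rightarrow> (nat \<Rightarrow> nat \<Rightarrow> int) \<Rightarrow> (nat \<Rightarrow> nat) \<Rightarrow> bool" where
  "conull_labels n A av \<longleftrightarrow> (\<forall>i\<le>n. av i > 0) \<and> (\<forall>j\<le>n. (\<Sum>i\<le>n. int (av i) * A i j) = 0)
      \<and> Gcd (av ` {..n}) = 1"

text \<open>Realization: h^* is the real vector space 'v of dimension n+2, h is identified with
the (linear) dual of h^*, so the coroots are linear functionals cor i on 'v and the pairing
<mu, alpha_i^v> is cor i mu.\<close>
definition realization ::
  "nat \<Rightarrow> (nat \<Rightarrow> nat \<Rightarrow> int) \<Rightarrow> (nat \<Rightarrow> 'v::euclidean_space) \<Rightarrow> (nat \<Rightarrow> 'v \<Rightarrow> real) \<Rightarrow> bool" where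
  "realization n A \<alpha> cor \<longleftrightarrow> DIM('v) = n + 2 \<and> (\<forall>i\<le>n. linear (cor i)) \<and>
     (\<forall>c::nat \<Rightarrow> real. (\<Sum>i\<le>n. c i *\<^sub>R \<alpha> i) = 0 \<longrightarrow> (\<forall>i\<le>n. c i = 0)) \<and>
     (\<forall>c::nat \<Rightarrow> real. (\<forall>v. (\<Sum>i\<le>n. c i * cor i v) = 0) \<longrightarrow> (\<forall>i\<le>n. c i = 0)) \<and>
     (\<forall>i\<le>n. \<forall>j\<le>n. cor i (\<alpha> j) = of_int (A i j))"

text \<open>delta, c (as the functional <-, c>), and the Coxeter number h.\<close>
definition delta :: "nat \<Rightarrow> (nat \<Rightarrow> nat) \<Rightarrow> (nat \<Rightarrow> 'v::real_vector) \<Rightarrow> 'v" where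
  "delta n a \<alpha> = (\<Sum>i\<le>n. real (a i) *\<^sub>R \<alpha> i)"

definition cpair :: "nat \<Rightarrow> (nat \<Rightarrow> nat) \<Rightarrow> (nat \<Rightarrow> 'v \<Rightarrow> real) \<Rightarrow> 'v \<Rightarrow> real" where
  "cpair n av cor v = (\<Sum>i\<le>n. real (av i) * cor i v)"

definition coxeter_number :: "nat \<Rightarrow> (nat \<Rightarrow> nat) \<Rightarrow> nat" where
  "coxeter_number n a = (\<Sum>i\<le>n. a i)"

definition V0 :: "nat \<Rightarrow> (nat \<Rightarrow> 'v::real_vector) \<Rightarrow> 'v set" where
  "V0 n \<alpha> = span (\<alpha> ` {1..n})"

definition std_form :: "nat \<Rightarrow> (nat \<Rightarrow> nat) \<Rightarrow> (nat \<Rightarrow> nat) \<Rightarrow> (nat \<Rightarrow> 'v::real_vector)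
    \<Rightarrow> (nat \<Rightarrow> 'v \<Rightarrow> real) \<Rightarrow> ('v \<Rightarrow> 'v \<Rightarrow> real) \<Rightarrow> bool" where
  "std_form n a av \<alpha> cor B \<longleftrightarrow> bilinear B \<and> (\<forall>v w. B v w = B w v) \<and>
     (\<forall>i\<le>n. \<forall>v. B v (\<alpha> i) = (real (av i) / real (a i)) * cor i v)"

definition srefl :: "(nat \<Rightarrow> 'v::real_vector) \<Rightarrow> (nat \<Rightarrow> 'v \<Rightarrow> real) \<Rightarrow> nat \<Rightarrow> 'v \<Rightarrow> 'v" where
  "srefl \<alpha> cor i v = v - cor i v *\<^sub>R \<alpha> i"

inductive_set W0 :: "nat \<Rightarrow> (nat \<Rightarrow> 'v::real_vector) \<Rightarrow> (nat \<Rightarrow> 'v \<Rightarrow> real) \<Rightarrow> ('v \<Rightarrow> 'v) set"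
  for n \<alpha> cor where
  W0_id: "id \<in> W0 n \<alpha> cor"
| W0_step: "w \<in> W0 n \<alpha> cor \<Longrightarrow> 1 \<le> i \<Longrightarrow> i \<le> n \<Longrightarrow> srefl \<alpha> cor i \<circ> w \<in> W0 n \<alpha> cor"

definition transl :: "nat \<Rightarrow> (nat \<Rightarrow> nat) \<Rightarrow> (nat \<Rightarrow> nat) \<Rightarrow> (nat \<Rightarrow> 'v::real_vector)
    \<Rightarrow> (nat \<Rightarrow> 'v \<Rightarrow> real) \<Rightarrow> ('v \<Rightarrow> 'v \<Rightarrow> real) \<Rightarrow> 'v \<Rightarrow> 'v \<Rightarrow> 'v" where
  "transl n a av \<alpha> cor B x v = v + cpair n av cor v *\<^sub>R x
      - (B v x + (1/2) * B x x * cpair n av cor v) *\<^sub>R delta n a \<alpha>"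

text \<open>L_mu(g) = <mu - g mu, rho^v>, with rho^v given as a linear functional rho on h^*.\<close>
definition Lfun :: "('v::real_vector \<Rightarrow> real) \<Rightarrow> 'v \<Rightarrow> ('v \<Rightarrow> 'v) \<Rightarrow> real" where
  "Lfun rho \<mu> g = rho (\<mu> - g \<mu>)"

end

(* Everything follows from the explicit formula for t_x.  Since <delta, rho^v> = h, applying
   rho^v gives, for any linear g,
     L_mu(t_x g) = L_mu(g) - <g mu, c> rho^v(x) + h ((g mu | x) + |x|^2 <g mu, c> / 2),
   which is affine in x except for the quadratic term; polarising it produces the cross term
   h <g mu, c> (x|y).  For g = u in W_0 the level is preserved and u fixes Lambda_0 and delta, so
   L_Lambda(u) = L_lambda(u).  For g = t_y with y in V_0 the level is preserved as well, and
   (t_y v | x) = (v|x) + <v, c> (y|x) because (delta|x) = <x, c> = 0 on V_0. *)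

theory Submission
  imports Defs
begin

lemma Lfun_add_fixed:
  assumes "linear rho" "linear g" "g \<nu> = \<nu>"
  shows "Lfun rho (\<mu> + \<nu>) g = Lfun rho \<mu> g"
  using assms by (simp add: Lfun_def linear_add)

locale labelled_realization =
  fixes n :: nat and A :: "nat \<Rightarrow> nat \<Rightarrow> int" and a av :: "nat \<Rightarrow> nat"
    and \<alpha> :: "nat \<Rightarrow> 'v::euclidean_space" and cor :: "nat \<Rightarrow> 'v \<Rightarrow> real"
    and B :: "'v \<Rightarrow> 'v \<Rightarrow> real"
  assumes realization: "realization n A \<alpha> cor"
    and null_labels: "null_labels n A a"
    and conull_labels: "conull_labels n A av"
    and std_form: "std_form n a av \<alpha> cor B"
begin

abbreviation level :: "'v \<Rightarrow> real" where "level \<equiv> cpair n av cor"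
abbreviation \<delta> :: 'v where "\<delta> \<equiv> delta n a \<alpha>"
abbreviation t :: "'v \<Rightarrow> 'v \<Rightarrow> 'v" where "t \<equiv> transl n a av \<alpha> cor B"

lemma linear_coroot: "i \<le> n \<Longrightarrow> linear (cor i)"
  using realization by (simp add: realization_def)

lemma coroot_root: "i \<le> n \<Longrightarrow> j \<le> n \<Longrightarrow> cor i (\<alpha> j) = of_int (A i j)"
  using realization by (simp add: realization_def)

lemma linear_level: "linear level"
  unfolding cpair_def
  by (intro linear_compose_sum ballI linearI)
     (simp_all add: linear_coroot linear_add linear_scale algebra_simps)

lemma level_root:
  assumes "j \<le> n"
  shows "level (\<alpha> j) = 0"
proof -
  have "level (\<alpha> j) = of_int (\<Sum>i\<le>n. int (av i) * A i j)"
    using assms by (simp add: cpair_def coroot_root)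
  also have "\<dots> = 0"
    using conull_labels assms by (simp add: conull_labels_def)
  finally show ?thesis .
qed

lemma level_V0: "v \<in> V0 n \<alpha> \<Longrightarrow> level v = 0"
  unfolding V0_def
  by (rule linear_eq_0_on_span[OF linear_level]) (auto simp: level_root)

lemma coroot_delta:
  assumes "i \<le> n"
  shows "cor i \<delta> = 0"
proof -
  have "cor i \<delta> = of_int (\<Sum>j\<le>n. A i j * int (a j))"
    using assms
    by (simp add: delta_def linear_sum[OF linear_coroot] linear_scale[OF linear_coroot]
        coroot_root mult.commute)
  also have "\<dots> = 0"
    using null_labels assms by (simp add: null_labels_def)
  finally show ?thesis .
qed

lemma level_delta: "level \<delta> = 0"
  by (simp add: cpair_def coroot_delta)

lemma bilinear_form: "bilinear B"
  and form_sym: "B v w = B w v"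
  using std_form by (auto simp: std_form_def)

lemmas form_linear_simps = bilinear_ladd[OF bilinear_form] bilinear_radd[OF bilinear_form]
  bilinear_lsub[OF bilinear_form] bilinear_rsub[OF bilinear_form]
  bilinear_lmul[OF bilinear_form] bilinear_rmul[OF bilinear_form]

lemma form_delta: "B v \<delta> = level v"
proof -
  have "B v \<delta> = (\<Sum>i\<le>n. real (a i) * B v (\<alpha> i))"
    using bilinear_form
    by (simp add: delta_def bilinear_def linear_sum[of "B v"] linear_scale[of "B v"])
  also have "\<dots> = level v"
    using std_form null_labels by (auto simp: cpair_def std_form_def null_labels_def intro!: sum.cong)
  finally show ?thesis .
qed

lemma level_fundamental_weight:
  assumes "\<forall>j\<le>n. cor j \<Lambda>0 = (if j = 0 then 1 else 0)"
  shows "level \<Lambda>0 = real (av 0)"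
proof -
  have "level \<Lambda>0 = (\<Sum>j\<le>n. if j = 0 then real (av 0) else 0)"
    unfolding cpair_def using assms by (intro sum.cong) auto
  then show ?thesis by simp
qed

lemma linear_srefl: "i \<le> n \<Longrightarrow> linear (srefl \<alpha> cor i)"
  unfolding srefl_def
  by (intro linearI)
     (simp_all add: linear_add[OF linear_coroot] linear_scale[OF linear_coroot] algebra_simps)

lemma W0_linear: "w \<in> W0 n \<alpha> cor \<Longrightarrow> linear w"
  by (induction rule: W0.induct)
     (auto intro: linear_ident linear_compose linear_srefl simp del: o_apply)

lemma W0_level: "w \<in> W0 n \<alpha> cor \<Longrightarrow> level (w v) = level v"
  by (induction rule: W0.induct)
     (simp_all add: srefl_def linear_diff[OF linear_level] linear_scale[OF linear_level] level_root)

lemma W0_fixes: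
  assumes "w \<in> W0 n \<alpha> cor" and "\<forall>i\<in>{1..n}. cor i v = 0"
  shows "w v = v"
  using assms by (induction rule: W0.induct) (simp_all add: srefl_def)

lemma level_transl: "y \<in> V0 n \<alpha> \<Longrightarrow> level (t y v) = level v"
  by (simp add: transl_def linear_add[OF linear_level] linear_diff[OF linear_level]
      linear_scale[OF linear_level] level_V0 level_delta)

lemma form_transl:
  assumes "x \<in> V0 n \<alpha>"
  shows "B (t y v) x = B v x + level v * B y x"
proof -
  have "B \<delta> x = 0"
    using assms by (simp add: form_sym[of \<delta>] form_delta level_V0)
  then show ?thesis
    by (simp add: transl_def form_linear_simps)
qed

end

locale labelled_realization_rho = labelled_realization n A a av \<alpha> cor B
  for n A a av and \<alpha> :: "nat \<Rightarrow> 'v::euclidean_space" and cor B +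
  fixes rho :: "'v \<Rightarrow> real"
  assumes linear_rho: "linear rho"
    and rho_root: "\<forall>i\<le>n. rho (\<alpha> i) = 1"
begin

abbreviation h :: real where "h \<equiv> real (coxeter_number n a)"

lemma rho_delta: "rho \<delta> = h"
  using rho_root
  by (simp add: delta_def coxeter_number_def linear_sum[OF linear_rho] linear_scale[OF linear_rho])

lemma Lfun_transl_comp:
  "Lfun rho \<mu> (t x \<circ> g)
     = Lfun rho \<mu> g - level (g \<mu>) * rho x + h * (B (g \<mu>) x + 1/2 * B x x * level (g \<mu>))"
  by (simp add: Lfun_def transl_def linear_add[OF linear_rho] linear_diff[OF linear_rho]
      linear_scale[OF linear_rho] rho_delta algebra_simps)

lemma Lfun_transl:
  "Lfun rho \<mu> (t x) = - level \<mu> * rho x + h * (B \<mu> x + 1/2 * B x x * level \<mu>)"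
  using Lfun_transl_comp[of \<mu> x id] by (simp add: Lfun_def linear_0[OF linear_rho])

lemma Lfun_transl_add_comp:
  assumes "level (g \<mu>) = l"
  shows "Lfun rho \<mu> (t (x + y) \<circ> g)
           = Lfun rho \<mu> (t x \<circ> g) + Lfun rho \<mu> (t y \<circ> g) + (h * l * B x y - Lfun rho \<mu> g)"
  using assms form_sym[of y x]
  by (simp add: Lfun_transl_comp linear_add[OF linear_rho] form_linear_simps algebra_simps)

lemma Lfun_transl_transl:
  assumes "x \<in> V0 n \<alpha>" "y \<in> V0 n \<alpha>"
  shows "Lfun rho \<mu> (t x \<circ> t y) = Lfun rho \<mu> (t x) + Lfun rho \<mu> (t y) + h * level \<mu> * B x y"
  using assms form_sym[of y x]
  by (simp add: Lfun_transl_comp Lfun_transl level_transl form_transl algebra_simps)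

end

theorem theorem2p4:
  fixes n :: nat and A :: "nat \<Rightarrow> nat \<Rightarrow> int" and a av :: "nat \<Rightarrow> nat"
    and \<alpha> :: "nat \<Rightarrow> 'v::euclidean_space" and cor :: "nat \<Rightarrow> 'v \<Rightarrow> real"
    and B :: "'v \<Rightarrow> 'v \<Rightarrow> real" and rho :: "'v \<Rightarrow> real"
    and \<Lambda>0 lam \<Lambda> x y :: 'v and u :: "'v \<Rightarrow> 'v" and lev :: nat and z :: int
  assumes aff: "affine_type n A"
    and a: "null_labels n A a" and av: "conull_labels n A av" and av0: "av 0 = 1"
    and real: "realization n A \<alpha> cor"
    and form: "std_form n a av \<alpha> cor B"
    and rho: "linear rho" "\<forall>i\<le>n. rho (\<alpha> i) = 1"
    and Lam0: "\<forall>j\<le>n. cor j \<Lambda>0 = (if j = 0 then 1 else 0)"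
    and lam: "lam \<in> V0 n \<alpha>" "\<forall>i\<in>{1..n}. \<exists>k::nat. cor i lam = real k"
    and Lam: "\<Lambda> = lam + real lev *\<^sub>R \<Lambda>0 + real_of_int z *\<^sub>R delta n a \<alpha>"
      "\<forall>i\<le>n. \<exists>k::nat. cor i \<Lambda> = real k"
      "cpair n av cor \<Lambda> = real lev"
    and xy: "x \<in> V0 n \<alpha>" "y \<in> V0 n \<alpha>"
    and u: "u \<in> W0 n \<alpha> cor"
  shows "Lfun rho \<Lambda> (transl n a av \<alpha> cor B (x + y) \<circ> u)
           = Lfun rho \<Lambda> (transl n a av \<alpha> cor B x \<circ> u) + Lfun rho \<Lambda> (transl n a av \<alpha> cor B y \<circ> u)
             + (real (coxeter_number n a) * real lev * B x y - Lfun rho lam u)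
       \<and> (\<forall>i\<le>n. \<forall>\<omega>. \<omega> \<in> V0 n \<alpha> \<and> (\<forall>j\<in>{1..n}. cor j \<omega> = (if j = i then 1 else 0)) \<longrightarrow>
            (let \<Lambda>i = (real (av i) / real (av 0)) *\<^sub>R \<Lambda>0 + \<omega> in
             Lfun rho \<Lambda>i (transl n a av \<alpha> cor B x \<circ> transl n a av \<alpha> cor B y)
              = Lfun rho \<Lambda>i (transl n a av \<alpha> cor B x) + Lfun rho \<Lambda>i (transl n a av \<alpha> cor B y)
                + real (coxeter_number n a) * (real (av i) / real (av 0)) * B x y))"
proof -
  interpret labelled_realization_rho n A a av \<alpha> cor B rho
    using real a av form rho
    by (simp add: labelled_realization_rho_def labelled_realization_def
        labelled_realization_rho_axioms_def)
  have level_Lam0: "level \<Lambda>0 = 1"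
    using level_fundamental_weight[OF Lam0] av0 by simp
  define \<nu> where "\<nu> = real lev *\<^sub>R \<Lambda>0 + real_of_int z *\<^sub>R \<delta>"
  have "u \<nu> = \<nu>"
    using Lam0 by (intro W0_fixes[OF u])
      (simp add: \<nu>_def linear_add[OF linear_coroot] linear_scale[OF linear_coroot] coroot_delta)
  then have "Lfun rho \<Lambda> u = Lfun rho lam u"
    unfolding Lam(1) add.assoc \<nu>_def[symmetric]
    by (intro Lfun_add_fixed linear_rho W0_linear[OF u])
  moreover have "level (u \<Lambda>) = real lev"
    using W0_level[OF u] Lam(3) by simp
  ultimately have "Lfun rho \<Lambda> (t (x + y) \<circ> u)
      = Lfun rho \<Lambda> (t x \<circ> u) + Lfun rho \<Lambda> (t y \<circ> u) + (h * real lev * B x y - Lfun rho lam u)"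
    using Lfun_transl_add_comp by simp
  moreover have "Lfun rho \<Lambda>i (t x \<circ> t y) = Lfun rho \<Lambda>i (t x) + Lfun rho \<Lambda>i (t y)
      + h * (real (av i) / real (av 0)) * B x y"
    if "\<omega> \<in> V0 n \<alpha>" and "\<Lambda>i = (real (av i) / real (av 0)) *\<^sub>R \<Lambda>0 + \<omega>" for i \<omega> \<Lambda>i
  proof -
    have "level \<Lambda>i = real (av i) / real (av 0)"
      using that level_Lam0 level_V0
      by (simp add: linear_add[OF linear_level] linear_scale[OF linear_level])
    then show ?thesis
      using Lfun_transl_transl[OF xy] by simp
  qed
  ultimately show ?thesis
    unfolding Let_def by blast
qed

end
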